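(* Let $\mathcal{H}$ be the space of real or complex $m\times n$ matrices with Frobenius inner product, $r\ge2$, and $\Sigma=\Sigma_r$ the set of matrices of rank at most $r$. Then uniform recovery of $\Sigma_r$ with the regularizer $\|\cdot\|_\Sigma$ is impossible: the descent set $\mathcal{T}_{\|\cdot\|_\Sigma}(\Sigma)$ equals $\mathcal{E}(\Sigma)$, so that for every linear operator $M$ on $\mathcal{H}$ with nontrivial null space there exists $x_0\in\Sigma_r$ which is not the unique minimizer of $\min_x\|x\|_\Sigma$ subject to $Mx=Mx_0$.
   Context: $\|\cdot\|_\Sigma$ is the atomic norm with atoms $\Sigma\cap S(1)$ ($S(1)$ the unit Frobenius sphere): $\|x\|_\Sigma=\inf\{t\ge0:x\in t\cdot\overline{\mathrm{conv}}(\Sigma\cap S(1))\}$, $+\infty$ if none; $\mathcal{E}(\Sigma)=\{x:\|x\|_\Sigma<\infty\}$. Descent set: $\mathcal{T}_f(\Sigma)=\bigcup_{x\in\Sigma}\{z:f(x+z)\le f(x)\}$. *)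

theory Defs
  imports "HOL-Analysis.Analysis"
begin

definition low_rank :: "nat \<Rightarrow> ('k::field ^'n^'m) set" where
  "low_rank r = {A. rank A \<le> r}"

text \<open>Atomic norm with atoms S intersected with the unit sphere; value +infinity if no t exists.
  The norm of the matrix types is the Frobenius norm.\<close>
definition atomic_norm :: "'a::real_normed_vector set \<Rightarrow> 'a \<Rightarrow> ereal" where
  "atomic_norm S x =
     Inf {ereal t | t. t \<ge> 0 \<and> x \<in> (\<lambda>y. t *\<^sub>R y) ` closure (convex hull (S \<inter> sphere 0 1))}"

definition finite_atomic :: "'a::real_normed_vector set \<Rightarrow> 'a set" where
  "finite_atomic S = {x. atomic_norm S x < \<infinity>}"

definition descent_set :: "('a::real_vector \<Rightarrow> ereal) \<Rightarrow> 'a set \<Rightarrow> 'a set" where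
  "descent_set f S = (\<Union>x\<in>S. {z. f (x + z) \<le> f x})"

end

theory Submission imports Defs begin

text \<open>Writing a matrix as the sum of its single entries, each of rank one, shows that every
  matrix has finite atomic norm. For the descent property, given a direction z \<noteq> 0 pick an entry
  p with z(p) \<noteq> 0 and put x = K t u e(p), where K is the number of entries, u a unit scalar pointing
  against z(p) and t large. Then x + z is the sum of the K rank-two matrices t u e(p) + z(q) e(q).
  Their norms are at most t + |z(q)|^2 / (2t), except the one at q = p whose norm is t - |z(p)|;
  for t large the total is at most K t = norm x, and the Frobenius norm bounds the atomic norm
  from below. So every direction, in particular every nonzero kernel vector of a measurement map,
  is a descent direction at some point of the low-rank set.\<close>

lemma norm_le_atomic_norm: "ereal (norm x) \<le> atomic_norm S x"
  unfolding atomic_norm_def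
proof (rule Inf_greatest)
  fix e assume "e \<in> {ereal t |t. 0 \<le> t \<and> x \<in> (*\<^sub>R) t ` closure (convex hull (S \<inter> sphere 0 1))}"
  then obtain t y where t: "e = ereal t" "0 \<le> t" "x = t *\<^sub>R y"
    and y: "y \<in> closure (convex hull (S \<inter> sphere 0 1))" by auto
  have "convex hull (S \<inter> sphere 0 1) \<subseteq> cball 0 1"
    by (rule hull_minimal) auto
  then have "closure (convex hull (S \<inter> sphere 0 1)) \<subseteq> cball 0 1"
    by (rule closure_minimal) auto
  with y have "norm y \<le> 1" by auto
  then show "ereal (norm x) \<le> e"
    using t by (simp add: mult_left_le)
qed

lemma atomic_norm_sum_le:
  fixes y :: "'i \<Rightarrow> 'a::real_normed_vector"
  assumes "finite I" and cone: "\<And>c x. 0 < c \<Longrightarrow> x \<in> S \<Longrightarrow> c *\<^sub>R x \<in> S"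
    and y: "\<And>j. j \<in> I \<Longrightarrow> y j \<in> S" and atom: "a \<in> S \<inter> sphere 0 1"
  shows "atomic_norm S (sum y I) \<le> ereal (\<Sum>j\<in>I. norm (y j))"
proof -
  define T where "T = (\<Sum>j\<in>I. norm (y j))"
  define C where "C = convex hull (S \<inter> sphere 0 1)"
  have "\<exists>w \<in> closure C. sum y I = T *\<^sub>R w"
  proof (cases "T = 0")
    case True
    then have "sum y I = 0"
      using \<open>finite I\<close> by (simp add: T_def sum_nonneg_eq_0_iff)
    moreover have "a \<in> closure C"
      using atom unfolding C_def by (meson closure_subset hull_inc subsetD)
    ultimately show ?thesis
      using True by auto
  next
    case False
    then have "T > 0"
      unfolding T_def by (metis less_eq_real_def norm_ge_zero sum_nonneg)
    define J where "J = {j\<in>I. y j \<noteq> 0}"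
    have "finite J"
      using \<open>finite I\<close> by (simp add: J_def)
    have sum_J: "sum y I = sum y J" and T_J: "T = (\<Sum>j\<in>J. norm (y j))"
      unfolding T_def by (rule sum.mono_neutral_right; use \<open>finite I\<close> in \<open>auto simp: J_def\<close>)+
    have "(\<Sum>j\<in>J. (norm (y j) / T) *\<^sub>R (y j /\<^sub>R norm (y j))) \<in> C"
    proof (rule convex_sum[OF \<open>finite J\<close>])
      show "convex C"
        unfolding C_def by simp
      show "(\<Sum>j\<in>J. norm (y j) / T) = 1"
        using T_J \<open>T > 0\<close> by (simp add: sum_divide_distrib[symmetric])
      show "\<And>j. j \<in> J \<Longrightarrow> 0 \<le> norm (y j) / T"
        using \<open>T > 0\<close> by simp
      show "y j /\<^sub>R norm (y j) \<in> C" if "j \<in> J" for j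
        using that y[of j] cone[of "inverse (norm (y j))" "y j"] unfolding C_def J_def
        by (intro hull_inc) auto
    qed
    also have "(\<Sum>j\<in>J. (norm (y j) / T) *\<^sub>R (y j /\<^sub>R norm (y j))) = sum y I /\<^sub>R T"
      by (auto simp: sum_J scaleR_sum_right J_def divide_inverse intro!: sum.cong)
    finally show ?thesis
      using \<open>T > 0\<close> closure_subset by (intro bexI[of _ "sum y I /\<^sub>R T"]) auto
  qed
  moreover have "T \<ge> 0"
    unfolding T_def by (simp add: sum_nonneg)
  ultimately show ?thesis
    unfolding atomic_norm_def T_def[symmetric] C_def[symmetric] by (intro Inf_lower) auto
qed

lemma descent_set_eq_UNIV_iff:
  "descent_set f S = UNIV \<longleftrightarrow> (\<forall>z. \<exists>x\<in>S. f (x + z) \<le> f x)"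
  unfolding descent_set_def by blast

lemma not_unique_minimizer_if_descent_set_eq_UNIV:
  assumes "descent_set f S = UNIV" and "linear M" and "z \<noteq> 0" and "M z = 0"
  shows "\<exists>x0\<in>S. \<exists>x. x \<noteq> x0 \<and> M x = M x0 \<and> f x \<le> f x0"
proof -
  obtain x0 where "x0 \<in> S" and "f (x0 + z) \<le> f x0"
    using assms(1) by (auto simp: descent_set_eq_UNIV_iff)
  moreover have "M (x0 + z) = M x0"
    using assms(2,4) by (simp add: linear_add)
  ultimately show ?thesis
    using \<open>z \<noteq> 0\<close> by (intro bexI[of _ x0] exI[of _ "x0 + z"]) auto
qed

lemma rank_le_card_nonzero_rows: "rank A \<le> card {i. row i A \<noteq> 0}"
proof -
  have "rows A \<subseteq> vec.span ((\<lambda>i. row i A) ` {i. row i A \<noteq> 0})"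
  proof
    fix v assume "v \<in> rows A"
    then obtain i where "v = row i A"
      by (auto simp: rows_def)
    then show "v \<in> vec.span ((\<lambda>i. row i A) ` {i. row i A \<noteq> 0})"
      by (cases "v = 0") (auto intro: vec.span_base vec.span_zero)
  qed
  then have "rank A \<le> card ((\<lambda>i. row i A) ` {i. row i A \<noteq> 0})"
    unfolding row_rank_def_gen by (intro vec.dim_le_card) auto
  also have "\<dots> \<le> card {i. row i A \<noteq> 0}"
    by (rule card_image_le) simp
  finally show ?thesis .
qed

lemma rank_scaleR_le:
  fixes A :: "'k::real_normed_field^'n^'m"
  shows "rank (c *\<^sub>R A) \<le> rank A"
proof -
  have "row i (c *\<^sub>R A) = of_real c *s row i A" for i
    by (simp add: vec_eq_iff row_def vector_scalar_mult_def of_real_def)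
  then have "rows (c *\<^sub>R A) \<subseteq> vec.span (rows A)"
    by (auto simp: rows_def intro: vec.span_scale vec.span_base)
  then show ?thesis
    unfolding row_rank_def_gen by (metis vec.dim_span vec.dim_subset)
qed

lemma scaleR_in_low_rank:
  fixes A :: "'k::real_normed_field^'n^'m"
  assumes "A \<in> low_rank r"
  shows "c *\<^sub>R A \<in> low_rank r"
  using rank_scaleR_le[of c A] assms by (simp add: low_rank_def)

definition single_entry :: "'m \<times> 'n \<Rightarrow> 'k::zero \<Rightarrow> 'k^'n^'m" where
  "single_entry p a = (\<chi> i j. if (i, j) = p then a else 0)"

lemma single_entry_nth [simp]: "single_entry p a $ i $ j = (if (i, j) = p then a else 0)"
  by (simp add: single_entry_def)

lemma scaleR_single_entry: "c *\<^sub>R single_entry p a = single_entry p (c *\<^sub>R a)"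
  by (simp add: vec_eq_iff)

lemma single_entry_add:
  fixes a b :: "'k::monoid_add"
  shows "single_entry p a + single_entry p b = single_entry p (a + b)"
  by (auto simp: vec_eq_iff)

lemma sum_single_entries: "(\<Sum>q\<in>UNIV. single_entry q (A $ fst q $ snd q)) = A"
proof -
  have "(\<Sum>q\<in>UNIV. if (i, j) = q then A $ fst q $ snd q else 0) = A $ i $ j" for i j
    by simp
  then show ?thesis
    by (simp add: vec_eq_iff)
qed

lemma rank_single_entry_add_le:
  fixes a b :: "'k::field"
  shows "rank (single_entry p a + single_entry q b :: 'k^'n^'m) \<le> 2"
proof -
  have "{i. row i (single_entry p a + single_entry q b :: 'k^'n^'m) \<noteq> 0} \<subseteq> {fst p, fst q}"
    by (auto simp: vec_eq_iff row_def)
  then have "card {i. row i (single_entry p a + single_entry q b :: 'k^'n^'m) \<noteq> 0}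
      \<le> card {fst p, fst q}"
    by (intro card_mono) auto
  also have "\<dots> \<le> 2"
    by (simp add: card_insert_if)
  finally show ?thesis
    using rank_le_card_nonzero_rows le_trans by blast
qed

lemma norm_matrix_squared:
  "(norm (A :: 'k::real_normed_field^'n^'m))\<^sup>2 = (\<Sum>q\<in>UNIV. (norm (A $ fst q $ snd q))\<^sup>2)"
proof -
  have "(norm A)\<^sup>2 = (\<Sum>i\<in>UNIV. \<Sum>j\<in>UNIV. (norm (A $ i $ j))\<^sup>2)"
    unfolding norm_vec_def L2_set_def by (simp add: sum_nonneg)
  also have "\<dots> = (\<Sum>q\<in>UNIV \<times> UNIV. (norm (A $ fst q $ snd q))\<^sup>2)"
    by (subst sum.cartesian_product') simp
  finally show ?thesis
    by simp
qed

lemma norm_single_entry: "norm (single_entry p a :: 'k::real_normed_field^'n^'m) = norm a"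
proof -
  have "(norm ((single_entry p a :: 'k^'n^'m) $ fst x $ snd x))\<^sup>2 = (if x = p then (norm a)\<^sup>2 else 0)"
    for x
    by auto
  then have "(norm (single_entry p a :: 'k^'n^'m))\<^sup>2 = (norm a)\<^sup>2"
    unfolding norm_matrix_squared by simp
  then show ?thesis
    by simp
qed

lemma norm_single_entry_add:
  assumes "p \<noteq> q"
  shows "norm (single_entry p a + single_entry q b :: 'k::real_normed_field^'n^'m)
    = sqrt ((norm a)\<^sup>2 + (norm b)\<^sup>2)"
proof -
  have "(norm ((single_entry p a + single_entry q b :: 'k^'n^'m) $ fst x $ snd x))\<^sup>2 =
      (if x = p then (norm a)\<^sup>2 else 0) + (if x = q then (norm b)\<^sup>2 else 0)" for x
    using assms by auto
  then have "(norm (single_entry p a + single_entry q b :: 'k^'n^'m))\<^sup>2 = (norm a)\<^sup>2 + (norm b)\<^sup>2"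
    unfolding norm_matrix_squared by (simp add: sum.distrib)
  then show ?thesis
    by (metis norm_ge_zero real_sqrt_unique)
qed

lemma single_entry_add_in_low_rank:
  fixes a :: "'k::field"
  assumes "2 \<le> r"
  shows "single_entry p a + single_entry q b \<in> (low_rank r :: ('k^'n^'m) set)"
  using rank_single_entry_add_le[of p a q b] assms by (simp add: low_rank_def)

lemma single_entry_in_low_rank:
  fixes a :: "'k::field"
  assumes "2 \<le> r"
  shows "single_entry p a \<in> (low_rank r :: ('k^'n^'m) set)"
  using single_entry_add_in_low_rank[OF assms, of p a p 0] by (simp add: single_entry_add)

lemma sqrt_square_add_le:
  fixes t a :: real
  assumes "0 < t" "0 \<le> a"
  shows "sqrt (t\<^sup>2 + a) \<le> t + a / (2 * t)"
proof (rule real_le_lsqrt)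
  show "t\<^sup>2 + a \<le> (t + a / (2 * t))\<^sup>2"
    using assms by (simp add: power2_eq_square field_simps)
qed (use assms in auto)

lemma sum_norm_rank_two_pieces_le:
  fixes z :: "'k::real_normed_field^'n^'m"
  assumes "z $ fst p $ snd p \<noteq> 0"
  defines "c \<equiv> norm (z $ fst p $ snd p)"
  defines "t \<equiv> c + (norm z)\<^sup>2 / c"
  defines "u \<equiv> - (z $ fst p $ snd p /\<^sub>R c)"
  shows "(\<Sum>q\<in>UNIV. norm (single_entry p (t *\<^sub>R u) + single_entry q (z $ fst q $ snd q)))
    \<le> real CARD('m \<times> 'n) * t"
proof -
  have "0 < c"
    using assms(1) by (simp add: c_def)
  then have "c \<le> t" and "0 < t"
    by (simp_all add: t_def add_pos_nonneg)
  define b where "b q = t + (norm (z $ fst q $ snd q))\<^sup>2 / (2 * t) - (if q = p then c else 0)" for q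
  have piece_le: "norm (single_entry p (t *\<^sub>R u) + single_entry q (z $ fst q $ snd q)) \<le> b q" for q
  proof (cases "q = p")
    case True
    have "t *\<^sub>R u + z $ fst p $ snd p = (1 - t / c) *\<^sub>R z $ fst p $ snd p"
      using \<open>0 < c\<close> by (simp add: u_def algebra_simps divide_inverse)
    then have "norm (t *\<^sub>R u + z $ fst p $ snd p) = t - c"
      using \<open>0 < c\<close> \<open>c \<le> t\<close> by (simp add: c_def[symmetric] abs_if field_simps)
    then show ?thesis
      using True \<open>0 < t\<close> by (simp add: single_entry_add norm_single_entry b_def)
  next
    case False
    have "norm (t *\<^sub>R u) = t"
      using \<open>0 < c\<close> \<open>0 < t\<close> by (simp add: u_def c_def)
    then have "norm (single_entry p (t *\<^sub>R u) + single_entry q (z $ fst q $ snd q) :: 'k^'n^'m)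
        = sqrt (t\<^sup>2 + (norm (z $ fst q $ snd q))\<^sup>2)"
      using False by (simp add: norm_single_entry_add)
    also have "\<dots> \<le> t + (norm (z $ fst q $ snd q))\<^sup>2 / (2 * t)"
      using \<open>0 < t\<close> by (simp add: sqrt_square_add_le)
    finally show ?thesis
      using False by (simp add: b_def)
  qed
  have "sum b UNIV = real CARD('m \<times> 'n) * t + (norm z)\<^sup>2 / (2 * t) - c"
    unfolding b_def norm_matrix_squared[of z]
    by (simp add: sum.distrib sum_subtractf sum_divide_distrib[symmetric])
  also have "\<dots> \<le> real CARD('m \<times> 'n) * t"
  proof -
    \<comment> \<open>t was chosen so that the square of norm z equals (t - c) c\<close>
    have "(norm z)\<^sup>2 \<le> 2 * t * c"
      using \<open>0 < c\<close> \<open>c \<le> t\<close> by (simp add: t_def field_simps)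
    then show ?thesis
      using \<open>0 < t\<close> by (simp add: divide_le_eq mult.commute)
  qed
  finally show ?thesis
    using sum_mono[of UNIV _ b] piece_le by (meson order_trans)
qed

lemma single_entry_one_in_low_rank_sphere:
  assumes "2 \<le> r"
  shows "single_entry p 1 \<in> (low_rank r :: ('k::real_normed_field^'n^'m) set) \<inter> sphere 0 1"
  using single_entry_in_low_rank[OF assms, of p "1::'k"] by (simp add: norm_single_entry)

lemma atomic_norm_low_rank_sum_le:
  fixes y :: "'i \<Rightarrow> 'k::real_normed_field^'n^'m"
  assumes "2 \<le> r" and "finite I" and "\<And>j. j \<in> I \<Longrightarrow> y j \<in> low_rank r"
  shows "atomic_norm (low_rank r) (sum y I) \<le> ereal (\<Sum>j\<in>I. norm (y j))"
  by (rule atomic_norm_sum_le[OF _ _ _ single_entry_one_in_low_rank_sphere[OF assms(1)]])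
    (use assms in \<open>auto intro: scaleR_in_low_rank\<close>)

lemma finite_atomic_low_rank:
  assumes "2 \<le> r"
  shows "finite_atomic (low_rank r :: ('k::real_normed_field^'n^'m) set) = UNIV"
proof -
  have "atomic_norm (low_rank r) A < \<infinity>" for A :: "'k^'n^'m"
  proof -
    have "atomic_norm (low_rank r) (\<Sum>q\<in>UNIV. single_entry q (A $ fst q $ snd q))
        \<le> ereal (\<Sum>q\<in>UNIV. norm (single_entry q (A $ fst q $ snd q) :: 'k^'n^'m))"
      using assms single_entry_in_low_rank by (intro atomic_norm_low_rank_sum_le) auto
    then show ?thesis
      by (auto simp: sum_single_entries)
  qed
  then show ?thesis
    by (auto simp: finite_atomic_def)
qed

lemma low_rank_descent:
  fixes z :: "'k::real_normed_field^'n^'m"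
  assumes "2 \<le> r"
  shows "\<exists>x\<in>low_rank r. atomic_norm (low_rank r) (x + z) \<le> atomic_norm (low_rank r) x"
proof (cases "z = 0")
  case True
  then show ?thesis
    using single_entry_one_in_low_rank_sphere[OF assms] by auto
next
  case False
  then obtain p where "z $ fst p $ snd p \<noteq> 0"
    by (auto simp: vec_eq_iff)
  define c where "c = norm (z $ fst p $ snd p)"
  define t where "t = c + (norm z)\<^sup>2 / c"
  define u where "u = - (z $ fst p $ snd p /\<^sub>R c)"
  define y where "y q = single_entry p (t *\<^sub>R u) + single_entry q (z $ fst q $ snd q)" for q
  define x :: "'k^'n^'m" where "x = single_entry p ((real CARD('m \<times> 'n) * t) *\<^sub>R u)"
  have "0 < t"
    using \<open>z $ fst p $ snd p \<noteq> 0\<close> by (simp add: t_def c_def add_pos_nonneg)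
  have "norm u = 1"
    using \<open>z $ fst p $ snd p \<noteq> 0\<close> by (simp add: u_def c_def)
  have "x \<in> low_rank r"
    unfolding x_def by (rule single_entry_in_low_rank[OF assms])
  have norm_x: "norm x = real CARD('m \<times> 'n) * t"
    using \<open>0 < t\<close> \<open>norm u = 1\<close> by (simp add: x_def norm_single_entry)
  have "sum y UNIV = real CARD('m \<times> 'n) *\<^sub>R single_entry p (t *\<^sub>R u) + z"
    by (simp add: y_def sum.distrib sum_single_entries sum_constant_scaleR del: sum_constant)
  then have "x + z = sum y UNIV"
    by (simp add: x_def scaleR_single_entry)
  moreover have "atomic_norm (low_rank r) (sum y UNIV) \<le> ereal (\<Sum>q\<in>UNIV. norm (y q))"
    by (rule atomic_norm_low_rank_sum_le[OF assms])
      (simp_all add: y_def single_entry_add_in_low_rank[OF assms])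
  ultimately have "atomic_norm (low_rank r) (x + z) \<le> ereal (\<Sum>q\<in>UNIV. norm (y q))"
    by simp
  also have "\<dots> \<le> ereal (norm x)"
    using sum_norm_rank_two_pieces_le[OF \<open>z $ fst p $ snd p \<noteq> 0\<close>] norm_x
    by (simp add: y_def t_def c_def u_def)
  also have "\<dots> \<le> atomic_norm (low_rank r) x"
    by (rule norm_le_atomic_norm)
  finally show ?thesis
    using \<open>x \<in> low_rank r\<close> by blast
qed

lemma low_rank_recovery_impossible:
  assumes "2 \<le> r"
  shows
   "descent_set (atomic_norm (low_rank r :: ('k::real_normed_field^'n^'m) set)) (low_rank r)
        = finite_atomic (low_rank r :: ('k^'n^'m) set)
     \<and> (\<forall>M :: 'k^'n^'m \<Rightarrow> 'k^'n^'m. linear M \<and> (\<exists>z. z \<noteq> 0 \<and> M z = 0) \<longrightarrow>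
          (\<exists>x0 \<in> low_rank r. \<exists>x. x \<noteq> x0 \<and> M x = M x0 \<and>
             atomic_norm (low_rank r) x \<le> atomic_norm (low_rank r) x0))"
proof -
  have descent: "descent_set (atomic_norm (low_rank r :: ('k^'n^'m) set)) (low_rank r) = UNIV"
    using low_rank_descent[OF assms] unfolding descent_set_eq_UNIV_iff by blast
  then show ?thesis
    using finite_atomic_low_rank[OF assms] not_unique_minimizer_if_descent_set_eq_UNIV[OF descent]
    by auto
qed

theorem proposition8:
  fixes r :: nat
  assumes "r \<ge> 2"
  shows
   "(descent_set (atomic_norm (low_rank r :: (real^'n^'m) set)) (low_rank r)
        = finite_atomic (low_rank r :: (real^'n^'m) set)
     \<and> (\<forall>M :: real^'n^'m \<Rightarrow> real^'n^'m. linear M \<and> (\<exists>z. z \<noteq> 0 \<and> M z = 0) \<longrightarrow>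
          (\<exists>x0 \<in> low_rank r. \<exists>x. x \<noteq> x0 \<and> M x = M x0 \<and>
             atomic_norm (low_rank r) x \<le> atomic_norm (low_rank r) x0)))
  \<and> (descent_set (atomic_norm (low_rank r :: (complex^'n^'m) set)) (low_rank r)
        = finite_atomic (low_rank r :: (complex^'n^'m) set)
     \<and> (\<forall>M :: complex^'n^'m \<Rightarrow> complex^'n^'m. linear M \<and> (\<exists>z. z \<noteq> 0 \<and> M z = 0) \<longrightarrow>
          (\<exists>x0 \<in> low_rank r. \<exists>x. x \<noteq> x0 \<and> M x = M x0 \<and>
             atomic_norm (low_rank r) x \<le> atomic_norm (low_rank r) x0)))"
  using low_rank_recovery_impossible[OF assms, where 'k=real]
    low_rank_recovery_impossible[OF assms, where 'k=complex]
  by blast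

end
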